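(* Let $d\ge 1$ and $p\in[0,1]$ with $0\le p<p_d=\frac{2d+1}{4d}$, and let $(S_n)$ be the $d$-dimensional elephant random walk with memory parameter $p$ described in the context. Then $$\lim_{n\to\infty}\frac{1}{n}S_n=0\quad\text{almost surely.}$$
   Context: Multi-dimensional elephant random walk (MERW). Fix a dimension $d\ge1$ and a memory parameter $p\in[0,1]$. Let $(e_1,\dots,e_d)$ be the standard basis of $\mathbb{R}^d$, $I_d$ the $d\times d$ identity matrix, and $J_d$ the $d\times d$ cyclic permutation matrix with entries $(J_d)_{i,i+1}=1$ for $1\le i\le d-1$, $(J_d)_{d,1}=1$, and all other entries $0$ (so $J_d^d=I_d$). Set $S_0=0$. The first step $X_1$ is uniformly distributed on the $2d$ vectors $\{\pm e_1,\dots,\pm e_d\}$. For $n\ge1$, given $\mathcal{F}_n=\sigma(X_1,\dots,X_n)$, the next step is $X_{n+1}=A_nX_{b_n}$, where $b_n$ is uniformly distributed on $\{1,\dots,n\}$, and $A_n$ is a random matrix, with $b_n$ and $A_n$ independent of each other and of $\mathcal{F}_n$, taking the value $I_d$ with probability $p$ and each of the $2d-1$ values $-I_d,\ \pm J_d,\ \pm J_d^2,\dots,\pm J_d^{d-1}$ with probability $\frac{1-p}{2d-1}$. The position is $S_n=X_1+\dots+X_n$. Define $a=\frac{2dp-1}{2d-1}$; note $p<p_d$ iff $a<1/2$. *)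

theory Defs
  imports "HOL-Probability.Probability"
begin

text \<open>Vectors of R^d are represented as functions nat => real (coordinates 0..d-1, zero
  outside), d x d matrices as functions nat => nat => real (entries (i,j) with i,j < d).\<close>

definition unit_vec :: "nat \<Rightarrow> nat \<Rightarrow> (nat \<Rightarrow> real)" where
  "unit_vec d i = (\<lambda>j. if j = i \<and> j < d then 1 else 0)"

definition id_mat :: "nat \<Rightarrow> (nat \<Rightarrow> nat \<Rightarrow> real)" where
  "id_mat d = (\<lambda>i j. if i = j \<and> i < d then 1 else 0)"

definition cyc_mat :: "nat \<Rightarrow> (nat \<Rightarrow> nat \<Rightarrow> real)" where
  "cyc_mat d = (\<lambda>i j. if i < d \<and> j < d \<and> ((i + 1 < d \<and> j = i + 1) \<or> (i + 1 = d \<and> j = 0))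
                      then 1 else 0)"

definition mat_mult :: "nat \<Rightarrow> (nat \<Rightarrow> nat \<Rightarrow> real) \<Rightarrow> (nat \<Rightarrow> nat \<Rightarrow> real) \<Rightarrow> (nat \<Rightarrow> nat \<Rightarrow> real)" where
  "mat_mult d A B = (\<lambda>i j. \<Sum>k<d. A i k * B k j)"

definition mat_pow :: "nat \<Rightarrow> (nat \<Rightarrow> nat \<Rightarrow> real) \<Rightarrow> nat \<Rightarrow> (nat \<Rightarrow> nat \<Rightarrow> real)" where
  "mat_pow d A k = ((mat_mult d A) ^^ k) (id_mat d)"

definition mat_vec :: "nat \<Rightarrow> (nat \<Rightarrow> nat \<Rightarrow> real) \<Rightarrow> (nat \<Rightarrow> real) \<Rightarrow> (nat \<Rightarrow> real)" where
  "mat_vec d A v = (\<lambda>i. if i < d then (\<Sum>j<d. A i j * v j) else 0)"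

definition step_pmf :: "nat \<Rightarrow> (nat \<Rightarrow> real) pmf" where
  "step_pmf d = pmf_of_set ({unit_vec d i | i. i < d} \<union> {- unit_vec d i | i. i < d})"

definition mat_set :: "nat \<Rightarrow> (nat \<Rightarrow> nat \<Rightarrow> real) set" where
  "mat_set d = {mat_pow d (cyc_mat d) k | k. k < d} \<union> {- mat_pow d (cyc_mat d) k | k. k < d}"

definition mat_pmf :: "nat \<Rightarrow> real \<Rightarrow> (nat \<Rightarrow> nat \<Rightarrow> real) pmf" where
  "mat_pmf d p = bind_pmf (bernoulli_pmf p)
     (\<lambda>c. if c then return_pmf (id_mat d) else pmf_of_set (mat_set d - {id_mat d}))"

text \<open>Innovation at time n: (first-step candidate, b_n uniform on {1..n}, A_n), all independent.
  Only the first component of innovation 0 and the last two components of innovations n >= 1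
  are used.\<close>
definition innov :: "nat \<Rightarrow> real \<Rightarrow> nat \<Rightarrow> ((nat \<Rightarrow> real) \<times> nat \<times> (nat \<Rightarrow> nat \<Rightarrow> real)) pmf" where
  "innov d p n = pair_pmf (step_pmf d) (pair_pmf (pmf_of_set {1..max 1 n}) (mat_pmf d p))"

definition merw_space :: "nat \<Rightarrow> real \<Rightarrow> (nat \<Rightarrow> ((nat \<Rightarrow> real) \<times> nat \<times> (nat \<Rightarrow> nat \<Rightarrow> real))) measure" where
  "merw_space d p = PiM UNIV (\<lambda>n. measure_pmf (innov d p n))"

text \<open>walk_steps d w n = [X_1, ..., X_n];  X_1 = fst (w 0), X_(n+1) = A_n X_(b_n) for n >= 1.\<close>
fun walk_steps :: "nat \<Rightarrow> (nat \<Rightarrow> ((nat \<Rightarrow> real) \<times> nat \<times> (nat \<Rightarrow> nat \<Rightarrow> real))) \<Rightarrow> nat \<Rightarrow> (nat \<Rightarrow> real) list" where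
  "walk_steps d w 0 = []"
| "walk_steps d w (Suc 0) = [fst (w 0)]"
| "walk_steps d w (Suc (Suc n)) =
     (let xs = walk_steps d w (Suc n); b = fst (snd (w (Suc n))); A = snd (snd (w (Suc n)))
      in xs @ [mat_vec d A (xs ! (b - 1))])"

definition merw_X :: "nat \<Rightarrow> (nat \<Rightarrow> ((nat \<Rightarrow> real) \<times> nat \<times> (nat \<Rightarrow> nat \<Rightarrow> real))) \<Rightarrow> nat \<Rightarrow> (nat \<Rightarrow> real)" where
  "merw_X d w n = walk_steps d w n ! (n - 1)"

definition merw_S :: "nat \<Rightarrow> (nat \<Rightarrow> ((nat \<Rightarrow> real) \<times> nat \<times> (nat \<Rightarrow> nat \<Rightarrow> real))) \<Rightarrow> nat \<Rightarrow> (nat \<Rightarrow> real)" where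
  "merw_S d w n = (\<lambda>i. \<Sum>k\<in>{1..n}. merw_X d w k i)"

end

theory Submission
  imports Defs "HOL-Library.Discrete_Functions"
begin

text \<open>Each step A_n X_{b_n} is again a unit vector, and averaging over the law of A_n
  turns A_n into a I, because the 2d signed cyclic shifts sum to zero. Hence
  E(|S_{n+1}|^2 | F_n) = (1 + 2a/n) |S_n|^2 + 1, and for a < 1/2 this recursion gives
  E |S_n|^2 <= c n. Along the squares, the sum over k of E |S_{k^2} / k^2|^2 <= c / k^2 is finite,
  so S_{k^2} / k^2 tends to 0 almost surely; since the increments of S are bounded by 1,
  this transfers to the whole sequence S_n / n.\<close>

definition sqnorm :: "nat \<Rightarrow> (nat \<Rightarrow> real) \<Rightarrow> real" where
  "sqnorm d x = (\<Sum>i<d. (x i)^2)"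

definition merw_a :: "nat \<Rightarrow> real \<Rightarrow> real" where
  "merw_a d p = (2 * real d * p - 1) / (2 * real d - 1)"

lemma sqnorm_nonneg: "sqnorm d x \<ge> 0"
  by (simp add: sqnorm_def sum_nonneg)

lemma merw_a_less_half_iff:
  assumes "d \<ge> 1"
  shows "merw_a d p < 1 / 2 \<longleftrightarrow> p < (2 * real d + 1) / (4 * real d)"
  using assms by (simp add: merw_a_def field_simps)

subsection \<open>The walk as a function of the innovations\<close>

lemma length_walk_steps [simp]: "length (walk_steps d w n) = n"
  by (induction d w n rule: walk_steps.induct) (auto simp: Let_def)

lemma walk_steps_cong: "(\<And>k. k < n \<Longrightarrow> w k = w' k) \<Longrightarrow> walk_steps d w n = walk_steps d w' n"
  by (induction d w n rule: walk_steps.induct) (auto simp: Let_def)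

lemma nth_walk_steps: "j < n \<Longrightarrow> walk_steps d w n ! j = merw_X d w (Suc j)"
proof (induction d w n rule: walk_steps.induct)
  case (3 d w n)
  show ?case
  proof (cases "j < Suc n")
    case True then show ?thesis using 3 by (simp add: Let_def nth_append)
  next
    case False then have "j = Suc n" using 3 by simp
    then show ?thesis by (simp add: merw_X_def Let_def nth_append)
  qed
qed (auto simp: merw_X_def)

lemma nth_walk_steps_ge: "n \<le> k \<Longrightarrow> walk_steps d w n ! k = [] ! (k - n)"
proof (induction d w n arbitrary: k rule: walk_steps.induct)
  case (2 d w) then show ?case by (cases k) auto
next
  case (3 d w n)
  have "k - Suc n = Suc (k - Suc (Suc n))" using 3 by simp
  then show ?case using 3 by (simp add: Let_def nth_append del: nth_Cons_Suc)
qed auto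

lemma merw_X_Suc:
  assumes "w n = (v, b, A)" and "b \<in> {1..n}"
  shows "merw_X d w (Suc n) = mat_vec d A (merw_X d w b)"
proof -
  obtain m where n: "n = Suc m" using assms(2) by (cases n) auto
  have "merw_X d w (Suc n) = mat_vec d A (walk_steps d w n ! (b - 1))"
    using assms(1) by (simp add: n merw_X_def Let_def nth_append)
  also have "walk_steps d w n ! (b - 1) = merw_X d w (Suc (b - 1))"
    using assms(2) by (intro nth_walk_steps) auto
  also have "Suc (b - 1) = b" using assms(2) by simp
  finally show ?thesis .
qed

lemma merw_S_Suc: "merw_S d w (Suc n) i = merw_S d w n i + merw_X d w (Suc n) i"
  by (simp add: merw_S_def)

lemma merw_X_cong: "(\<And>k. k < n \<Longrightarrow> w k = w' k) \<Longrightarrow> merw_X d w n = merw_X d w' n"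
  unfolding merw_X_def using walk_steps_cong by metis

lemma merw_S_cong: "(\<And>k. k < n \<Longrightarrow> w k = w' k) \<Longrightarrow> merw_S d w n = merw_S d w' n"
  unfolding merw_S_def by (intro ext sum.cong refl, rule fun_cong[OF merw_X_cong]) auto

subsection \<open>Signed cyclic permutation matrices\<close>

lemma cyc_mat_pow_apply:
  "mat_pow d (cyc_mat d) k i j = (if i < d \<and> j < d \<and> j = (i + k) mod d then 1 else 0)"
proof (induction k arbitrary: i j)
  case 0 then show ?case by (auto simp: mat_pow_def id_mat_def)
next
  case (Suc k)
  have cyc: "cyc_mat d i l = (if i < d \<and> l = (i + 1) mod d then 1 else 0)" for l
    unfolding cyc_mat_def by (cases "i + 1 < d") (auto simp: mod_if)
  have "mat_pow d (cyc_mat d) (Suc k) i j = (\<Sum>l<d. cyc_mat d i l * mat_pow d (cyc_mat d) k l j)"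
    by (simp add: mat_pow_def mat_mult_def)
  also have "\<dots> = (if i < d then mat_pow d (cyc_mat d) k ((i + 1) mod d) j else 0)"
    by (simp add: cyc if_distrib[of "\<lambda>x. x * _"] cong: if_cong)
  also have "\<dots> = (if i < d \<and> j < d \<and> j = (i + Suc k) mod d then 1 else 0)"
    by (simp add: Suc mod_add_left_eq)
  finally show ?case .
qed

lemma mat_vec_cyc_mat_pow:
  "mat_vec d (mat_pow d (cyc_mat d) k) x i = (if i < d then x ((i + k) mod d) else 0)"
  by (simp add: mat_vec_def cyc_mat_pow_apply if_distrib[of "\<lambda>x. x * _"] sum.delta cong: if_cong)

lemma mat_vec_uminus: "mat_vec d (- A) x = (\<lambda>i. - mat_vec d A x i)"
  by (auto simp: mat_vec_def sum_negf)

lemma mat_pow_0: "mat_pow d A 0 = id_mat d"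
  by (simp add: mat_pow_def)

lemma mat_vec_id_mat: "mat_vec d (id_mat d) x i = (if i < d then x i else 0)"
  using mat_vec_cyc_mat_pow[of d 0 x i] by (simp add: mat_pow_0)

lemma bij_betw_rotate:
  fixes d k :: nat
  assumes d: "d > 0"
  shows "bij_betw (\<lambda>i. (i + k) mod d) {..<d} {..<d}"
proof -
  have inj: "inj_on (\<lambda>i. (i + k) mod d) {..<d}"
  proof (rule inj_onI)
    fix i j assume "i \<in> {..<d}" "j \<in> {..<d}" "(i + k) mod d = (j + k) mod d"
    then have "(int i + int k) mod int d = (int j + int k) mod int d"
      by (metis of_nat_add of_nat_mod)
    then have "(int i + int k - int k) mod int d = (int j + int k - int k) mod int d"
      by (intro mod_diff_cong) auto
    then show "i = j" using \<open>i \<in> {..<d}\<close> \<open>j \<in> {..<d}\<close> by simp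
  qed
  have "(\<lambda>i. (i + k) mod d) ` {..<d} \<subseteq> {..<d}" using d by auto
  then show ?thesis
    using inj by (simp add: bij_betw_def endo_inj_surj)
qed

lemma sqnorm_rotate: "(d::nat) > 0 \<Longrightarrow> sqnorm d (\<lambda>i. x ((i + k) mod d)) = sqnorm d x"
  unfolding sqnorm_def using sum.reindex_bij_betw[OF bij_betw_rotate[of d k], of "\<lambda>i. (x i)^2"] by simp

lemma mat_set_eq:
  "mat_set d = (\<lambda>k. mat_pow d (cyc_mat d) k) ` {..<d} \<union> (\<lambda>k. - mat_pow d (cyc_mat d) k) ` {..<d}"
  unfolding mat_set_def by auto

lemma inj_on_cyc_mat_pow: "inj_on (\<lambda>k. mat_pow d (cyc_mat d) k) {..<d}"
proof (rule inj_onI)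
  fix k l assume kl: "k \<in> {..<d}" "l \<in> {..<d}" "mat_pow d (cyc_mat d) k = mat_pow d (cyc_mat d) l"
  have "mat_pow d (cyc_mat d) k 0 k = 1" using kl(1) by (simp add: cyc_mat_pow_apply)
  then have "mat_pow d (cyc_mat d) l 0 k = 1" using kl(3) by simp
  then show "k = l" using kl(1,2) by (simp add: cyc_mat_pow_apply split: if_splits)
qed

lemma inj_on_uminus_cyc_mat_pow: "inj_on (\<lambda>k. - mat_pow d (cyc_mat d) k) {..<d}"
proof (rule inj_onI)
  fix k l assume kl: "k \<in> {..<d}" "l \<in> {..<d}" "- mat_pow d (cyc_mat d) k = - mat_pow d (cyc_mat d) l"
  have "mat_pow d (cyc_mat d) k i j = mat_pow d (cyc_mat d) l i j" for i j
    using fun_cong[OF fun_cong[OF kl(3)], of i j] by simp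
  then have "mat_pow d (cyc_mat d) k = mat_pow d (cyc_mat d) l" by (intro ext)
  then show "k = l" using inj_on_cyc_mat_pow[of d] kl(1,2) unfolding inj_on_def by blast
qed

lemma cyc_mat_pow_neq_uminus:
  assumes "k < d" "l < d"
  shows "mat_pow d (cyc_mat d) k \<noteq> - mat_pow d (cyc_mat d) l"
proof
  assume "mat_pow d (cyc_mat d) k = - mat_pow d (cyc_mat d) l"
  then have "mat_pow d (cyc_mat d) k 0 k = - mat_pow d (cyc_mat d) l 0 k" by (metis uminus_apply)
  then show False using assms by (simp add: cyc_mat_pow_apply split: if_splits)
qed

lemma disjoint_cyc_mat_pow_images:
  "(\<lambda>k. mat_pow d (cyc_mat d) k) ` {..<d} \<inter> (\<lambda>k. - mat_pow d (cyc_mat d) k) ` {..<d} = {}"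
  using cyc_mat_pow_neq_uminus by auto

lemma finite_mat_set: "finite (mat_set d)"
  by (simp add: mat_set_eq)

lemma card_mat_set: "card (mat_set d) = 2 * d"
  unfolding mat_set_eq using disjoint_cyc_mat_pow_images
  by (subst card_Un_disjoint) (auto simp: card_image inj_on_cyc_mat_pow inj_on_uminus_cyc_mat_pow)

lemma id_mat_in_mat_set: "d > 0 \<Longrightarrow> id_mat d \<in> mat_set d"
  unfolding mat_set_eq using mat_pow_0[of d "cyc_mat d"] by (metis UnI1 image_eqI lessThan_iff)

lemma card_mat_set_minus_id: "d > 0 \<Longrightarrow> card (mat_set d - {id_mat d}) = 2 * d - 1"
  by (simp add: card_Diff_singleton finite_mat_set id_mat_in_mat_set card_mat_set)

lemma mat_set_cases:
  assumes "A \<in> mat_set d"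
  obtains k where "k < d" "A = mat_pow d (cyc_mat d) k \<or> A = - mat_pow d (cyc_mat d) k"
  using assms unfolding mat_set_def by auto

lemma sqnorm_mat_vec:
  assumes "d > 0" and "A \<in> mat_set d"
  shows "sqnorm d (mat_vec d A x) = sqnorm d x"
proof -
  obtain k where "k < d" "A = mat_pow d (cyc_mat d) k \<or> A = - mat_pow d (cyc_mat d) k"
    using assms(2) by (rule mat_set_cases)
  then have "sqnorm d (mat_vec d A x) = sqnorm d (\<lambda>i. x ((i + k) mod d))"
    by (auto simp: sqnorm_def mat_vec_uminus mat_vec_cyc_mat_pow)
  then show ?thesis using sqnorm_rotate[OF assms(1)] by simp
qed

lemma abs_mat_vec_le_1:
  assumes "A \<in> mat_set d" and "\<And>j. \<bar>x j\<bar> \<le> 1"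
  shows "\<bar>mat_vec d A x i\<bar> \<le> 1"
proof -
  obtain k where "A = mat_pow d (cyc_mat d) k \<or> A = - mat_pow d (cyc_mat d) k"
    using assms(1) by (rule mat_set_cases)
  then show ?thesis using assms(2) by (auto simp: mat_vec_uminus mat_vec_cyc_mat_pow)
qed

lemma sum_mat_set_mat_vec: "(\<Sum>A\<in>mat_set d. mat_vec d A x i) = 0"
  unfolding mat_set_eq using disjoint_cyc_mat_pow_images
  by (subst sum.union_disjoint)
    (auto simp: sum.reindex inj_on_cyc_mat_pow inj_on_uminus_cyc_mat_pow mat_vec_uminus sum_negf)

lemma sum_mat_set_minus_id_mat_vec:
  "d > 0 \<Longrightarrow> (\<Sum>A\<in>mat_set d - {id_mat d}. mat_vec d A x i) = - (if i < d then x i else 0)"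
  using sum_mat_set_mat_vec[of d x i]
  by (simp add: sum_diff1 finite_mat_set id_mat_in_mat_set mat_vec_id_mat)

lemma step_pmf_unit:
  assumes "d > 0" and "v \<in> set_pmf (step_pmf d)"
  shows "(\<forall>i. \<bar>v i\<bar> \<le> 1) \<and> sqnorm d v = 1"
proof -
  let ?U = "unit_vec d ` {..<d} \<union> (\<lambda>i. - unit_vec d i) ` {..<d}"
  have "set_pmf (step_pmf d) = ?U"
    unfolding step_pmf_def using assms(1) by (subst set_pmf_of_set) (auto simp: setcompr_eq_image)
  then obtain j where j: "j < d" "v = unit_vec d j \<or> v = - unit_vec d j"
    using assms(2) by auto
  have "sqnorm d (unit_vec d j) = 1"
    using j(1) by (simp add: sqnorm_def unit_vec_def if_distrib[where f="\<lambda>x. x^2"] cong: if_cong)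
  moreover have "\<forall>i. \<bar>unit_vec d j i\<bar> \<le> 1" by (simp add: unit_vec_def)
  ultimately show ?thesis using j(2) by (auto simp: sqnorm_def)
qed

lemma mat_set_minus_id_nonempty: "d > 0 \<Longrightarrow> mat_set d - {id_mat d} \<noteq> {}"
  using card_mat_set_minus_id[of d] by (intro notI) simp

lemma set_pmf_mat_pmf: "d > 0 \<Longrightarrow> set_pmf (mat_pmf d p) \<subseteq> mat_set d"
proof -
  assume d: "d > 0"
  have "set_pmf (pmf_of_set (mat_set d - {id_mat d})) = mat_set d - {id_mat d}"
    using finite_mat_set mat_set_minus_id_nonempty[OF d] by (intro set_pmf_of_set) auto
  then show ?thesis unfolding mat_pmf_def set_bind_pmf using id_mat_in_mat_set[OF d]
    by (intro UN_least) (simp split: if_split)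
qed

lemma nn_integral_mat_pmf:
  assumes d: "d > 0" and p: "0 \<le> p" "p \<le> 1" and F: "\<And>A. F A \<ge> 0"
  shows "(\<integral>\<^sup>+ A. ennreal (F A) \<partial>mat_pmf d p) =
    ennreal (p * F (id_mat d) + (1 - p) / (2 * real d - 1) * (\<Sum>A\<in>mat_set d - {id_mat d}. F A))"
proof -
  let ?M = "mat_set d - {id_mat d}"
  let ?m = "(\<Sum>A\<in>?M. F A) / (2 * real d - 1)"
  have m: "?m \<ge> 0" using d F by (simp add: sum_nonneg)
  have "(\<integral>\<^sup>+ A. ennreal (F A) \<partial>pmf_of_set ?M) = ennreal ?m"
    using mat_set_minus_id_nonempty[OF d] finite_mat_set[of d] card_mat_set_minus_id[OF d] d
    by (simp add: nn_integral_pmf_of_set F sum_nonneg ennreal_of_nat_eq_real_of_nat divide_ennreal)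
  then have "(\<integral>\<^sup>+ A. ennreal (F A) \<partial>mat_pmf d p) =
      ennreal (F (id_mat d)) * ennreal p + ennreal ?m * ennreal (1 - p)"
    unfolding mat_pmf_def using p by (simp add: F)
  also have "\<dots> = ennreal (F (id_mat d) * p) + ennreal (?m * (1 - p))"
    using p by (simp only: ennreal_mult''[OF p(1)] ennreal_mult''[of "1 - p"] diff_ge_0_iff_ge)
  also have "\<dots> = ennreal (F (id_mat d) * p + ?m * (1 - p))"
    using p F m by (intro ennreal_plus[symmetric] mult_nonneg_nonneg) auto
  finally show ?thesis by (simp add: field_simps)
qed

lemma sqnorm_add:
  "sqnorm d (\<lambda>i. x i + y i) = sqnorm d x + 2 * (\<Sum>i<d. x i * y i) + sqnorm d y"
  by (simp add: sqnorm_def power2_sum sum.distrib sum_distrib_left mult.assoc)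

lemma mean_sqnorm_add_mat_vec:
  fixes s x :: "nat \<Rightarrow> real"
  assumes d: "d > 0"
  defines "G \<equiv> \<lambda>A. sqnorm d (\<lambda>i. s i + mat_vec d A x i)"
  shows "p * G (id_mat d) + (1 - p) / (2 * real d - 1) * (\<Sum>A\<in>mat_set d - {id_mat d}. G A)
    = sqnorm d s + sqnorm d x + 2 * merw_a d p * (\<Sum>i<d. s i * x i)"
proof -
  let ?M = "mat_set d - {id_mat d}" and ?D = "\<Sum>i<d. s i * x i"
  have G: "G A = sqnorm d s + sqnorm d x + 2 * (\<Sum>i<d. s i * mat_vec d A x i)"
    if "A \<in> mat_set d" for A
    unfolding G_def sqnorm_add sqnorm_mat_vec[OF d that] by simp
  have GI: "G (id_mat d) = sqnorm d s + sqnorm d x + 2 * ?D"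
    using G[OF id_mat_in_mat_set[OF d]] by (simp add: mat_vec_id_mat)
  have GM: "(\<Sum>A\<in>?M. G A) = (2 * real d - 1) * (sqnorm d s + sqnorm d x) - 2 * ?D"
  proof -
    have "(\<Sum>A\<in>?M. G A) = real (card ?M) * (sqnorm d s + sqnorm d x)
        + 2 * (\<Sum>i<d. s i * (\<Sum>A\<in>?M. mat_vec d A x i))"
      by (simp add: G sum.distrib sum_distrib_left sum.swap[of _ ?M])
    also have "(\<Sum>i<d. s i * (\<Sum>A\<in>?M. mat_vec d A x i)) = - ?D"
      by (simp add: sum_mat_set_minus_id_mat_vec[OF d] sum_negf)
    finally show ?thesis using card_mat_set_minus_id[OF d] d by simp
  qed
  show ?thesis
    using d unfolding GI GM by (simp add: merw_a_def field_simps)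
qed

lemma nn_integral_mat_pmf_sqnorm:
  assumes d: "d > 0" and p: "0 \<le> p" "p \<le> 1"
  shows "(\<integral>\<^sup>+ A. ennreal (sqnorm d (\<lambda>i. s i + mat_vec d A x i)) \<partial>mat_pmf d p) =
    ennreal (sqnorm d s + sqnorm d x + 2 * merw_a d p * (\<Sum>i<d. s i * x i))"
  unfolding mean_sqnorm_add_mat_vec[OF d, symmetric] by (rule nn_integral_mat_pmf[OF d p sqnorm_nonneg])

lemma mean_sqnorm_nonneg:
  assumes d: "d > 0" and p: "0 \<le> p" "p \<le> 1"
  shows "0 \<le> sqnorm d s + sqnorm d x + 2 * merw_a d p * (\<Sum>i<d. s i * x i)"
  unfolding mean_sqnorm_add_mat_vec[OF d, symmetric]
  using p d by (intro add_nonneg_nonneg mult_nonneg_nonneg sum_nonneg divide_nonneg_nonneg sqnorm_nonneg) auto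

subsection \<open>Measurability on the product space\<close>

lemma product_prob_space_measure_pmf: "product_prob_space (\<lambda>k. measure_pmf (q k))"
  unfolding product_prob_space_def product_prob_space_axioms_def product_sigma_finite_def
  by (auto simp: prob_space_measure_pmf prob_space_imp_sigma_finite)

lemma measurable_PiM_pmf_component:
  "i \<in> I \<Longrightarrow> space N = UNIV \<Longrightarrow> (\<lambda>w. g (w i)) \<in> measurable (PiM I (\<lambda>k. measure_pmf (q k))) N"
  by (rule measurable_compose[OF measurable_component_singleton]) auto

text \<open>Out-of-range entries are the unspecified value [] ! _, which does not depend on w.\<close>

lemma nth_walk_steps_eq:
  "walk_steps d w n ! k = (if k < n then merw_X d w (Suc k) else [] ! (k - n))"
  by (simp add: nth_walk_steps nth_walk_steps_ge)

lemma borel_measurable_merw_X: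
  "{..<n} \<subseteq> I \<Longrightarrow> (\<lambda>w. merw_X d w n j) \<in> borel_measurable (PiM I (\<lambda>k. measure_pmf (q k)))"
proof (induction n arbitrary: j rule: less_induct)
  case (less n)
  let ?M = "PiM I (\<lambda>k. measure_pmf (q k))"
  consider "n = 0" | "n = 1" | m where "n = Suc (Suc m)"
    by (metis One_nat_def not0_implies_Suc)
  then show ?case
  proof cases
    case 1 then show ?thesis by (simp add: merw_X_def)
  next
    case 2 then show ?thesis
      using less.prems measurable_PiM_pmf_component[of 0 I borel "\<lambda>x. fst x j" q]
      by (auto simp: merw_X_def)
  next
    case 3
    have SmI: "Suc m \<in> I" using less.prems 3 by auto
    have X: "merw_X d w n j = (if j < d then (\<Sum>l<d. snd (snd (w (Suc m))) j l *
        (walk_steps d w (Suc m) ! (fst (snd (w (Suc m))) - 1)) l) else 0)" for w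
      by (simp add: 3 merw_X_def Let_def nth_append mat_vec_def)
    have "(\<lambda>w. merw_X d w (Suc k) l) \<in> borel_measurable ?M" if "k < Suc m" for k l
      using that less.prems 3 by (intro less.IH) auto
    then have "(\<lambda>w. (walk_steps d w (Suc m) ! k) l) \<in> borel_measurable ?M" for k l
      by (cases "k < Suc m") (simp_all add: nth_walk_steps_eq)
    then have "(\<lambda>w. (walk_steps d w (Suc m) ! (fst (snd (w (Suc m))) - 1)) l) \<in> borel_measurable ?M" for l
      by (rule measurable_compose_countable) (intro measurable_PiM_pmf_component SmI, simp)
    moreover have "(\<lambda>w. snd (snd (w (Suc m))) j l) \<in> borel_measurable ?M" for l
      using SmI by (intro measurable_PiM_pmf_component) auto
    ultimately show ?thesis unfolding X by measurable
  qed
qed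

lemma borel_measurable_merw_S:
  "{..<n} \<subseteq> I \<Longrightarrow> (\<lambda>w. merw_S d w n j) \<in> borel_measurable (PiM I (\<lambda>k. measure_pmf (q k)))"
  unfolding merw_S_def by (intro borel_measurable_sum borel_measurable_merw_X) auto

lemma borel_measurable_sqnorm [measurable (raw)]:
  "(\<And>i. (\<lambda>x. f x i) \<in> borel_measurable M) \<Longrightarrow> (\<lambda>x. sqnorm d (f x)) \<in> borel_measurable M"
  unfolding sqnorm_def by measurable

lemma (in product_prob_space) nn_integral_restrict_PiM:
  assumes "finite J" "J \<subseteq> I" and g: "g \<in> borel_measurable (PiM J M)"
  shows "(\<integral>\<^sup>+ w. g (restrict w J) \<partial>PiM I M) = (\<integral>\<^sup>+ x. g x \<partial>PiM J M)"
proof -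
  have "(\<integral>\<^sup>+ w. g (restrict w J) \<partial>PiM I M) = (\<integral>\<^sup>+ x. g x \<partial>distr (PiM I M) (PiM J M) (\<lambda>w. restrict w J))"
    by (rule nn_integral_distr[symmetric]) (simp_all only: measurable_restrict_subset[OF assms(2)] measurable_distr_eq1 g)
  then show ?thesis using distr_PiM_restrict_finite[OF assms(1,2)] by simp
qed

lemma nn_integral_PiM_integrate_coordinate:
  fixes f h :: "(nat \<Rightarrow> 'a) \<Rightarrow> ennreal" and q :: "nat \<Rightarrow> 'a pmf"
  defines "M \<equiv> \<lambda>k. measure_pmf (q k)"
  assumes f: "f \<in> borel_measurable (PiM {..n} M)"
    and h: "h \<in> borel_measurable (PiM {..<n} M)"
    and f_cong: "\<And>w w'. (\<And>k. k \<le> n \<Longrightarrow> w k = w' k) \<Longrightarrow> f w = f w'"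
    and h_cong: "\<And>w w'. (\<And>k. k < n \<Longrightarrow> w k = w' k) \<Longrightarrow> h w = h w'"
    and f_h: "\<And>w. (\<integral>\<^sup>+ y. f (w(n := y)) \<partial>M n) = h w"
  shows "(\<integral>\<^sup>+ w. f w \<partial>PiM UNIV M) = (\<integral>\<^sup>+ w. h w \<partial>PiM UNIV M)"
proof -
  interpret P: product_prob_space M UNIV
    unfolding M_def by (rule product_prob_space_measure_pmf)
  have "(\<integral>\<^sup>+ w. f w \<partial>PiM UNIV M) = (\<integral>\<^sup>+ w. f (restrict w {..n}) \<partial>PiM UNIV M)"
    by (intro nn_integral_cong f_cong) auto
  also have "\<dots> = (\<integral>\<^sup>+ x. f x \<partial>PiM (insert n {..<n}) M)"
    using f by (simp add: P.nn_integral_restrict_PiM lessThan_Suc_atMost[symmetric] lessThan_Suc)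
  also have "\<dots> = (\<integral>\<^sup>+ x. (\<integral>\<^sup>+ y. f (x(n := y)) \<partial>M n) \<partial>PiM {..<n} M)"
    using f by (intro P.product_nn_integral_insert)
      (auto simp: lessThan_Suc_atMost[symmetric] lessThan_Suc)
  also have "\<dots> = (\<integral>\<^sup>+ w. h (restrict w {..<n}) \<partial>PiM UNIV M)"
    using h by (simp add: f_h P.nn_integral_restrict_PiM)
  also have "\<dots> = (\<integral>\<^sup>+ w. h w \<partial>PiM UNIV M)"
    by (intro nn_integral_cong h_cong) auto
  finally show ?thesis .
qed

subsection \<open>The conditional second moment\<close>

lemma merw_S_fun_upd:
  assumes "b \<in> {1..n}"
  shows "merw_S d (w(n := (v, b, A))) (Suc n) i = merw_S d w n i + mat_vec d A (merw_X d w b) i"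
proof -
  let ?w = "w(n := (v, b, A))"
  have "merw_S d ?w n = merw_S d w n"
    by (rule merw_S_cong) simp
  moreover have "merw_X d ?w (Suc n) = mat_vec d A (merw_X d ?w b)"
    using assms by (intro merw_X_Suc) auto
  moreover have "merw_X d ?w b = merw_X d w b"
    using assms by (intro merw_X_cong) auto
  ultimately show ?thesis by (simp add: merw_S_Suc)
qed

lemma nn_integral_innov_sqnorm_merw_S:
  assumes d: "d > 0" and p: "0 \<le> p" "p \<le> 1" and n: "n \<ge> 1"
  shows "(\<integral>\<^sup>+ y. ennreal (sqnorm d (merw_S d (w(n := y)) (Suc n))) \<partial>innov d p n) =
    ennreal ((1 + 2 * merw_a d p / real n) * sqnorm d (merw_S d w n)
       + (\<Sum>b\<in>{1..n}. sqnorm d (merw_X d w b)) / real n)"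
proof -
  let ?S = "merw_S d w n"
  define H where "H b = sqnorm d ?S + sqnorm d (merw_X d w b) + 2 * merw_a d p * (\<Sum>i<d. ?S i * merw_X d w b i)" for b
  have H: "(\<integral>\<^sup>+ A. ennreal (sqnorm d (merw_S d (w(n := (v, b, A))) (Suc n))) \<partial>mat_pmf d p) = ennreal (H b)"
    if "b \<in> {1..n}" for v b
    unfolding H_def merw_S_fun_upd[OF that] by (rule nn_integral_mat_pmf_sqnorm[OF d p])
  have "(\<integral>\<^sup>+ y. ennreal (sqnorm d (merw_S d (w(n := y)) (Suc n))) \<partial>innov d p n) =
      (\<integral>\<^sup>+ v. (\<Sum>b\<in>{1..n}. \<integral>\<^sup>+ A. ennreal (sqnorm d (merw_S d (w(n := (v, b, A))) (Suc n))) \<partial>mat_pmf d p)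
         / of_nat n \<partial>step_pmf d)"
    using n by (simp add: innov_def nn_integral_pair_pmf' max_def nn_integral_pmf_of_set)
  also have "\<dots> = (\<integral>\<^sup>+ v. (\<Sum>b\<in>{1..n}. ennreal (H b)) / of_nat n \<partial>step_pmf d)"
    by (intro nn_integral_cong arg_cong[where f="\<lambda>x. x / _"] sum.cong refl H)
  also have "\<dots> = ennreal ((\<Sum>b\<in>{1..n}. H b) / real n)"
    using n mean_sqnorm_nonneg[OF d p]
    by (simp add: measure_pmf.emeasure_space_1 sum_ennreal H_def sum_nonneg divide_ennreal
        ennreal_of_nat_eq_real_of_nat)
  also have "(\<Sum>b\<in>{1..n}. (\<Sum>i<d. ?S i * merw_X d w b i)) = sqnorm d ?S"
    by (subst sum.swap) (simp add: sqnorm_def merw_S_def power2_eq_square sum_distrib_left)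
  then have "(\<Sum>b\<in>{1..n}. H b) / real n = (1 + 2 * merw_a d p / real n) * sqnorm d ?S
       + (\<Sum>b\<in>{1..n}. sqnorm d (merw_X d w b)) / real n"
    using n by (simp add: H_def sum.distrib sum_distrib_left[symmetric] field_simps)
  finally show ?thesis .
qed

lemma nn_integral_sqnorm_merw_S_Suc:
  assumes d: "d > 0" and p: "0 \<le> p" "p \<le> 1" and n: "n \<ge> 1"
  shows "(\<integral>\<^sup>+ w. ennreal (sqnorm d (merw_S d w (Suc n))) \<partial>merw_space d p) =
    (\<integral>\<^sup>+ w. ennreal ((1 + 2 * merw_a d p / real n) * sqnorm d (merw_S d w n)
       + (\<Sum>b\<in>{1..n}. sqnorm d (merw_X d w b)) / real n) \<partial>merw_space d p)"
  unfolding merw_space_def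
proof (rule nn_integral_PiM_integrate_coordinate)
  let ?M = "\<lambda>I. PiM I (\<lambda>k. measure_pmf (innov d p k))"
  have "(\<lambda>w. sqnorm d (merw_S d w (Suc n))) \<in> borel_measurable (?M {..n})"
    by (intro borel_measurable_sqnorm borel_measurable_merw_S) auto
  then show "(\<lambda>w. ennreal (sqnorm d (merw_S d w (Suc n)))) \<in> borel_measurable (?M {..n})"
    by measurable
  have S: "(\<lambda>w. sqnorm d (merw_S d w n)) \<in> borel_measurable (?M {..<n})"
    by (intro borel_measurable_sqnorm borel_measurable_merw_S) simp
  have X: "(\<lambda>w. \<Sum>b\<in>{1..n}. sqnorm d (merw_X d w b)) \<in> borel_measurable (?M {..<n})"
    by (intro borel_measurable_sum borel_measurable_sqnorm borel_measurable_merw_X) auto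
  show "(\<lambda>w. ennreal ((1 + 2 * merw_a d p / real n) * sqnorm d (merw_S d w n)
       + (\<Sum>b\<in>{1..n}. sqnorm d (merw_X d w b)) / real n)) \<in> borel_measurable (?M {..<n})"
    using S X by measurable
  show "ennreal (sqnorm d (merw_S d w (Suc n))) = ennreal (sqnorm d (merw_S d w' (Suc n)))"
    if "\<And>k. k \<le> n \<Longrightarrow> w k = w' k" for w w'
    using merw_S_cong[of "Suc n" w w' d] that by simp
  show "ennreal ((1 + 2 * merw_a d p / real n) * sqnorm d (merw_S d w n)
       + (\<Sum>b\<in>{1..n}. sqnorm d (merw_X d w b)) / real n)
    = ennreal ((1 + 2 * merw_a d p / real n) * sqnorm d (merw_S d w' n)
       + (\<Sum>b\<in>{1..n}. sqnorm d (merw_X d w' b)) / real n)"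
    if w_w': "\<And>k. k < n \<Longrightarrow> w k = w' k" for w w'
  proof -
    have "merw_X d w b = merw_X d w' b" if "b \<in> {1..n}" for b
      using that by (intro merw_X_cong w_w') simp
    then have "(\<Sum>b\<in>{1..n}. sqnorm d (merw_X d w b)) = (\<Sum>b\<in>{1..n}. sqnorm d (merw_X d w' b))"
      by (intro sum.cong refl) simp
    moreover have "merw_S d w n = merw_S d w' n"
      by (rule merw_S_cong) (rule w_w')
    ultimately show ?thesis by (simp only:)
  qed
qed (rule nn_integral_innov_sqnorm_merw_S[OF d p n])

lemma AE_merw_space_support: "AE w in merw_space d p. \<forall>k. w k \<in> set_pmf (innov d p k)"
  unfolding merw_space_def AE_all_countable
proof
  fix k
  interpret P: product_prob_space "\<lambda>k. measure_pmf (innov d p k)" UNIV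
    by (rule product_prob_space_measure_pmf)
  show "AE w in PiM UNIV (\<lambda>k. measure_pmf (innov d p k)). w k \<in> set_pmf (innov d p k)"
    by (rule P.AE_component) (auto simp: AE_measure_pmf)
qed

lemma merw_X_unit:
  assumes d: "d > 0" and w: "\<forall>k. w k \<in> set_pmf (innov d p k)" and "m \<ge> 1"
  shows "(\<forall>i. \<bar>merw_X d w m i\<bar> \<le> 1) \<and> sqnorm d (merw_X d w m) = 1"
  using \<open>m \<ge> 1\<close>
proof (induction m rule: less_induct)
  case (less m)
  show ?case
  proof (cases "m = 1")
    case True
    have "fst (w 0) \<in> set_pmf (step_pmf d)"
      using w[rule_format, of 0] by (auto simp: innov_def mem_Times_iff)
    then show ?thesis
      using True step_pmf_unit[OF d] by (simp add: merw_X_def)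
  next
    case False
    then obtain n where m: "m = Suc n" and n: "n \<ge> 1" using less.prems by (cases m) auto
    obtain v b A where vbA: "w n = (v, b, A)" by (cases "w n") auto
    have b: "b \<in> {1..n}" and A: "A \<in> mat_set d"
      using w[rule_format, of n] set_pmf_mat_pmf[OF d, of p] vbA n
      by (auto simp: innov_def mem_Times_iff max_def)
    have X: "merw_X d w m = mat_vec d A (merw_X d w b)"
      unfolding m using vbA b by (rule merw_X_Suc)
    have "b < m" and "b \<ge> 1" using b m by auto
    then have "\<And>j. \<bar>merw_X d w b j\<bar> \<le> 1" and "sqnorm d (merw_X d w b) = 1"
      using less.IH[of b] by auto
    then show ?thesis
      unfolding X sqnorm_mat_vec[OF d A] using abs_mat_vec_le_1[OF A] by simp
  qed
qed

lemma AE_sum_sqnorm_merw_X: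
  assumes "d > 0"
  shows "AE w in merw_space d p. \<forall>m. (\<Sum>b\<in>{1..m}. sqnorm d (merw_X d w b)) = real m"
  using AE_merw_space_support
proof eventually_elim
  case (elim w)
  then show ?case using merw_X_unit[OF assms elim] by simp
qed

lemma prob_space_merw_space: "prob_space (merw_space d p)"
  unfolding merw_space_def by (simp add: prob_space_PiM prob_space_measure_pmf)

lemma nn_integral_sqnorm_merw_S_1:
  assumes "d > 0"
  shows "(\<integral>\<^sup>+ w. ennreal (sqnorm d (merw_S d w 1)) \<partial>merw_space d p) = 1"
proof -
  have "AE w in merw_space d p. sqnorm d (merw_S d w 1) = 1"
    using AE_sum_sqnorm_merw_X[OF assms, of p]
    by eventually_elim (drule spec[of _ 1], simp add: merw_S_def)
  then have "(\<integral>\<^sup>+ w. ennreal (sqnorm d (merw_S d w 1)) \<partial>merw_space d p) = (\<integral>\<^sup>+ w. 1 \<partial>merw_space d p)"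
    by (intro nn_integral_cong_AE) (auto elim!: eventually_mono)
  then show ?thesis
    by (simp add: prob_space.emeasure_space_1[OF prob_space_merw_space])
qed

lemma nn_integral_sqnorm_merw_S_Suc_le:
  assumes d: "d > 0" and p: "0 \<le> p" "p \<le> 1" and m: "m \<ge> 1"
  defines "k \<equiv> max 0 (1 + 2 * merw_a d p / real m)"
  shows "(\<integral>\<^sup>+ w. ennreal (sqnorm d (merw_S d w (Suc m))) \<partial>merw_space d p)
    \<le> ennreal k * (\<integral>\<^sup>+ w. ennreal (sqnorm d (merw_S d w m)) \<partial>merw_space d p) + 1"
proof -
  have "(\<integral>\<^sup>+ w. ennreal (sqnorm d (merw_S d w (Suc m))) \<partial>merw_space d p)
      = (\<integral>\<^sup>+ w. ennreal ((1 + 2 * merw_a d p / real m) * sqnorm d (merw_S d w m) + 1) \<partial>merw_space d p)"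
    unfolding nn_integral_sqnorm_merw_S_Suc[OF d p m]
    by (rule nn_integral_cong_AE) (use AE_sum_sqnorm_merw_X[OF d, of p] m in auto)
  also have "\<dots> \<le> (\<integral>\<^sup>+ w. ennreal k * ennreal (sqnorm d (merw_S d w m)) + 1 \<partial>merw_space d p)"
  proof (rule nn_integral_mono)
    fix w
    have "(1 + 2 * merw_a d p / real m) * sqnorm d (merw_S d w m) + 1 \<le> k * sqnorm d (merw_S d w m) + 1"
      unfolding k_def by (intro add_right_mono mult_right_mono sqnorm_nonneg) simp
    then have "ennreal ((1 + 2 * merw_a d p / real m) * sqnorm d (merw_S d w m) + 1)
        \<le> ennreal (k * sqnorm d (merw_S d w m) + 1)"
      by (rule ennreal_leI)
    also have "\<dots> = ennreal k * ennreal (sqnorm d (merw_S d w m)) + 1"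
      using sqnorm_nonneg[of d "merw_S d w m"] by (simp add: k_def ennreal_mult)
    finally show "ennreal ((1 + 2 * merw_a d p / real m) * sqnorm d (merw_S d w m) + 1)
        \<le> ennreal k * ennreal (sqnorm d (merw_S d w m)) + 1" .
  qed
  also have "\<dots> = ennreal k * (\<integral>\<^sup>+ w. ennreal (sqnorm d (merw_S d w m)) \<partial>merw_space d p) + 1"
  proof -
    have "(\<lambda>w. sqnorm d (merw_S d w m)) \<in> borel_measurable (merw_space d p)"
      unfolding merw_space_def by (intro borel_measurable_sqnorm borel_measurable_merw_S) simp
    then show ?thesis
      by (simp add: nn_integral_add nn_integral_cmult prob_space.emeasure_space_1[OF prob_space_merw_space])
  qed
  finally show ?thesis .
qed

lemma linear_growth_step:
  fixes a c :: real
  assumes c: "c \<ge> 1" "c * (1 - 2 * a) \<ge> 1" and m: "m > 0"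
  shows "max 0 (1 + 2 * a / real m) * (c * real m) + 1 \<le> c * real (Suc m)"
proof (cases "1 + 2 * a / real m \<ge> 0")
  case True
  then have "max 0 (1 + 2 * a / real m) * (c * real m) + 1 = c * real m + 2 * a * c + 1"
    using m by (simp add: field_simps)
  then show ?thesis using c(2) by (simp add: algebra_simps)
next
  case False
  have "1 \<le> c + c * real m" using c(1) by (simp add: add_increasing2)
  with False show ?thesis by (simp add: algebra_simps)
qed

lemma nn_integral_sqnorm_merw_S_le:
  assumes d: "d > 0" and p: "0 \<le> p" "p \<le> 1" and a: "merw_a d p < 1 / 2"
  defines "c \<equiv> max 1 (1 / (1 - 2 * merw_a d p))"
  shows "(\<integral>\<^sup>+ w. ennreal (sqnorm d (merw_S d w n)) \<partial>merw_space d p) \<le> ennreal (c * real n)"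
proof (induction n)
  case 0
  then show ?case by (simp add: merw_S_def sqnorm_def)
next
  case (Suc m)
  have c: "c \<ge> 1" "1 / (1 - 2 * merw_a d p) \<le> c"
    by (simp_all add: c_def)
  show ?case
  proof (cases "m = 0")
    case True
    then show ?thesis using nn_integral_sqnorm_merw_S_1[OF d] c(1) by simp
  next
    case False
    define k where "k = max 0 (1 + 2 * merw_a d p / real m)"
    have "c * (1 - 2 * merw_a d p) \<ge> 1"
      using a c(2) by (simp add: field_simps)
    with c(1) False have step: "k * (c * real m) + 1 \<le> c * real (Suc m)"
      unfolding k_def by (intro linear_growth_step) auto
    have "(\<integral>\<^sup>+ w. ennreal (sqnorm d (merw_S d w (Suc m))) \<partial>merw_space d p)
        \<le> ennreal k * (\<integral>\<^sup>+ w. ennreal (sqnorm d (merw_S d w m)) \<partial>merw_space d p) + 1"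
      unfolding k_def using False by (intro nn_integral_sqnorm_merw_S_Suc_le[OF d p]) simp
    also have "\<dots> \<le> ennreal k * ennreal (c * real m) + 1"
      using Suc.IH by (intro add_right_mono mult_left_mono) auto
    also have "\<dots> = ennreal (k * (c * real m) + 1)"
      using c(1) by (simp add: k_def ennreal_mult)
    also have "\<dots> \<le> ennreal (c * real (Suc m))"
      using step by (rule ennreal_leI)
    finally show ?thesis .
  qed
qed

subsection \<open>From a linear second moment to the strong law\<close>

lemma abs_diff_le_of_unit_increments:
  fixes s :: "nat \<Rightarrow> real"
  assumes incr: "\<And>n. \<bar>s (Suc n) - s n\<bar> \<le> 1" and "m \<le> n"
  shows "\<bar>s n - s m\<bar> \<le> real (n - m)"
  using \<open>m \<le> n\<close>
proof (induction n rule: dec_induct)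
  case (step n)
  have "\<bar>s (Suc n) - s m\<bar> \<le> \<bar>s (Suc n) - s n\<bar> + \<bar>s n - s m\<bar>" by linarith
  with incr[of n] step show ?case by (simp add: Suc_diff_le)
qed simp

lemma filterlim_floor_sqrt_at_top: "filterlim floor_sqrt at_top sequentially"
  unfolding filterlim_at_top eventually_sequentially
  by (auto intro: le_floor_sqrtI)

lemma tendsto_div_of_unit_increments:
  fixes s :: "nat \<Rightarrow> real"
  assumes incr: "\<And>n. \<bar>s (Suc n) - s n\<bar> \<le> 1"
    and squares: "(\<lambda>k. s ((Suc k)^2) / real ((Suc k)^2)) \<longlonglongrightarrow> 0"
  shows "(\<lambda>n. s n / real n) \<longlonglongrightarrow> 0"
proof -
  define f where "f k = \<bar>s (k^2) / real (k^2)\<bar> + 2 / real k" for k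
  have "(\<lambda>k. s (k^2) / real (k^2)) \<longlonglongrightarrow> 0"
    using squares by (rule LIMSEQ_imp_Suc[where f = "\<lambda>k. s (k^2) / real (k^2)"])
  then have "f \<longlonglongrightarrow> 0"
    unfolding f_def by (intro tendsto_add_zero tendsto_rabs_zero tendsto_divide_0[OF tendsto_const]
        filterlim_at_top_imp_at_infinity filterlim_real_sequentially)
  then have f_sqrt: "(\<lambda>n. f (floor_sqrt n)) \<longlonglongrightarrow> 0"
    by (rule filterlim_compose[OF _ filterlim_floor_sqrt_at_top])
  show ?thesis
  proof (rule Lim_null_comparison[OF _ f_sqrt])
    show "\<forall>\<^sub>F n in sequentially. norm (s n / real n) \<le> f (floor_sqrt n)"
      unfolding eventually_sequentially
    proof (intro exI[of _ 1] allI impI)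
      fix n :: nat assume n: "1 \<le> n"
      define r where "r = floor_sqrt n"
      have r: "r \<ge> 1" "r^2 \<le> n" "n < (Suc r)^2"
        using n unfolding r_def by (auto intro: le_floor_sqrtI Suc_floor_sqrt_power2_gt)
      have "\<bar>s n - s (r^2)\<bar> \<le> real (n - r^2)"
        using incr r(2) by (rule abs_diff_le_of_unit_increments)
      also have "\<dots> \<le> 2 * real r"
        using r(3) by (simp add: power2_eq_square of_nat_diff)
      finally have "\<bar>s n\<bar> / real n \<le> (\<bar>s (r^2)\<bar> + 2 * real r) / real n"
        using n by (intro divide_right_mono) auto
      also have "\<dots> \<le> (\<bar>s (r^2)\<bar> + 2 * real r) / real (r^2)"
        using r n by (intro divide_left_mono) (auto intro!: mult_pos_pos simp del: of_nat_power)
      also have "\<dots> = f r"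
        using r(1) by (simp add: f_def add_divide_distrib power2_eq_square)
      finally show "norm (s n / real n) \<le> f (floor_sqrt n)"
        by (simp add: r_def)
    qed
  qed
qed

lemma AE_tendsto_zero_of_suminf_nn_integral_finite:
  fixes f :: "nat \<Rightarrow> 'a \<Rightarrow> real"
  assumes meas: "\<And>k. f k \<in> borel_measurable M" and nonneg: "\<And>k x. 0 \<le> f k x"
    and fin: "(\<Sum>k. \<integral>\<^sup>+ x. ennreal (f k x) \<partial>M) \<noteq> \<infinity>"
  shows "AE x in M. (\<lambda>k. f k x) \<longlonglongrightarrow> 0"
proof -
  have "(\<integral>\<^sup>+ x. (\<Sum>k. ennreal (f k x)) \<partial>M) \<noteq> \<infinity>"
    using fin meas by (subst nn_integral_suminf) auto
  then have "AE x in M. (\<Sum>k. ennreal (f k x)) \<noteq> \<infinity>"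
    using meas by (intro nn_integral_PInf_AE) auto
  then show ?thesis
  proof eventually_elim
    case (elim x)
    then have "summable (\<lambda>k. f k x)"
      using nonneg by (intro summable_suminf_not_top) auto
    then show ?case by (rule summable_LIMSEQ_zero)
  qed
qed

lemma nn_integral_square_div_le:
  fixes f :: "'a \<Rightarrow> real"
  assumes f: "f \<in> borel_measurable M" and c: "0 \<le> c" and N: "0 < N"
    and moment: "(\<integral>\<^sup>+ x. ennreal ((f x)^2) \<partial>M) \<le> ennreal (c * N)"
  shows "(\<integral>\<^sup>+ x. ennreal ((f x / N)^2) \<partial>M) \<le> ennreal (c / N)"
proof -
  have "(\<integral>\<^sup>+ x. ennreal ((f x / N)^2) \<partial>M) = ennreal (1 / N^2) * (\<integral>\<^sup>+ x. ennreal ((f x)^2) \<partial>M)"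
    using f by (subst nn_integral_cmult[symmetric])
      (auto simp: ennreal_mult[symmetric] power_divide intro!: nn_integral_cong)
  also have "\<dots> \<le> ennreal (1 / N^2) * ennreal (c * N)"
    using moment by (rule mult_left_mono) simp
  also have "\<dots> = ennreal (1 / N^2 * (c * N))"
    by (rule ennreal_mult''[symmetric]) (use N c in simp)
  also have "1 / N^2 * (c * N) = c / N"
    using N by (simp add: power2_eq_square)
  finally show ?thesis .
qed

lemma summable_div_Suc_square: "summable (\<lambda>k. c / real (Suc k)^2)"
proof -
  have "summable (\<lambda>n. inverse (real n ^ 2))"
    by (rule inverse_power_summable) simp
  then have "summable (\<lambda>k. inverse (real (Suc k) ^ 2))"
    by (subst summable_Suc_iff)
  then show ?thesis
    using summable_mult[of _ c] by (simp add: divide_inverse)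
qed

lemma AE_tendsto_div_of_linear_second_moment:
  fixes s :: "nat \<Rightarrow> 'a \<Rightarrow> real"
  assumes meas: "\<And>n. s n \<in> borel_measurable M" and c: "0 \<le> c"
    and moment: "\<And>n. (\<integral>\<^sup>+ x. ennreal ((s n x)^2) \<partial>M) \<le> ennreal (c * real n)"
    and incr: "AE x in M. \<forall>n. \<bar>s (Suc n) x - s n x\<bar> \<le> 1"
  shows "AE x in M. (\<lambda>n. s n x / real n) \<longlonglongrightarrow> 0"
proof -
  define g where "g k x = (s ((Suc k)^2) x / real ((Suc k)^2))^2" for k x
  have "(\<integral>\<^sup>+ x. ennreal (g k x) \<partial>M) \<le> ennreal (c / real (Suc k)^2)" for k
    using nn_integral_square_div_le[OF meas c _ moment, of "(Suc k)^2"] by (simp add: g_def)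
  then have "(\<Sum>k. \<integral>\<^sup>+ x. ennreal (g k x) \<partial>M) \<le> (\<Sum>k. ennreal (c / real (Suc k)^2))"
    by (intro suminf_le summableI)
  also have "\<dots> = ennreal (\<Sum>k. c / real (Suc k)^2)"
    using c summable_div_Suc_square by (intro suminf_ennreal2) auto
  finally have "(\<Sum>k. \<integral>\<^sup>+ x. ennreal (g k x) \<partial>M) \<noteq> \<infinity>"
    unfolding infinity_ennreal_def by (rule neq_top_trans[OF ennreal_neq_top])
  then have "AE x in M. (\<lambda>k. g k x) \<longlonglongrightarrow> 0"
    using meas by (intro AE_tendsto_zero_of_suminf_nn_integral_finite) (auto simp: g_def)
  with incr show ?thesis
  proof eventually_elim
    case (elim x)
    have "(\<lambda>k. \<bar>s ((Suc k)^2) x / real ((Suc k)^2)\<bar>) \<longlonglongrightarrow> 0"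
      using tendsto_real_sqrt[OF elim(2)] by (simp add: g_def)
    then have "(\<lambda>k. s ((Suc k)^2) x / real ((Suc k)^2)) \<longlonglongrightarrow> 0"
      by (rule tendsto_rabs_zero_cancel)
    with elim(1) show ?case
      by (intro tendsto_div_of_unit_increments) auto
  qed
qed

lemma AE_abs_merw_S_Suc_diff_le_1:
  assumes "d > 0"
  shows "AE w in merw_space d p. \<forall>n. \<bar>merw_S d w (Suc n) i - merw_S d w n i\<bar> \<le> 1"
  using AE_merw_space_support
proof eventually_elim
  case (elim w)
  then show ?case using merw_X_unit[OF assms elim] by (simp add: merw_S_Suc)
qed

lemma AE_merw_S_div_tendsto_0:
  assumes d: "d > 0" and p: "0 \<le> p" "p \<le> 1" and a: "merw_a d p < 1 / 2" and i: "i < d"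
  shows "AE w in merw_space d p. (\<lambda>n. merw_S d w n i / real n) \<longlonglongrightarrow> 0"
proof (rule AE_tendsto_div_of_linear_second_moment)
  let ?c = "max 1 (1 / (1 - 2 * merw_a d p))"
  show "(\<lambda>w. merw_S d w n i) \<in> borel_measurable (merw_space d p)" for n
    unfolding merw_space_def by (rule borel_measurable_merw_S) simp
  show "0 \<le> ?c" by simp
  have "(\<integral>\<^sup>+ w. ennreal ((merw_S d w n i)^2) \<partial>merw_space d p)
      \<le> (\<integral>\<^sup>+ w. ennreal (sqnorm d (merw_S d w n)) \<partial>merw_space d p)" for n
    using i by (intro nn_integral_mono ennreal_leI) (auto simp: sqnorm_def intro: member_le_sum)
  then show "(\<integral>\<^sup>+ w. ennreal ((merw_S d w n i)^2) \<partial>merw_space d p) \<le> ennreal (?c * real n)" for n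
    using nn_integral_sqnorm_merw_S_le[OF d p a, of n] by (rule order_trans)
  show "AE w in merw_space d p. \<forall>n. \<bar>merw_S d w (Suc n) i - merw_S d w n i\<bar> \<le> 1"
    using d by (rule AE_abs_merw_S_Suc_diff_le_1)
qed

theorem theorem3p1:
  fixes d :: nat and p :: real
  assumes "d \<ge> 1" and "0 \<le> p" and "p \<le> 1"
    and "p < (2 * real d + 1) / (4 * real d)"
  shows "AE w in merw_space d p. \<forall>i<d. (\<lambda>n. merw_S d w n i / real n) \<longlonglongrightarrow> 0"
proof -
  have "merw_a d p < 1 / 2"
    using merw_a_less_half_iff[OF assms(1)] assms(4) by blast
  then have "AE w in merw_space d p. \<forall>i\<in>{..<d}. (\<lambda>n. merw_S d w n i / real n) \<longlonglongrightarrow> 0"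
    using assms(1-3) by (intro AE_finite_allI AE_merw_S_div_tendsto_0) auto
  then show ?thesis by eventually_elim auto
qed

end
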